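(* Let $\mathbf{I}$ be a $d$-system of ideals in a ring $R$ and $A:=\mathscr{A}(R,\mathbf{I})$. For each $1\le k\le d$ there is a short exact sequence of left $A$-modules $$0\to Ae_{k+1}\xrightarrow{\psi}Ae_k\to\Delta_k\to0$$ (with the convention $Ae_{d+1}:=0$), where $\psi$ restricts, for every $1\le i\le d$, to the canonical inclusion $e_iAe_{k+1}=I_{i,k+1}/I_{i,d+1}\hookrightarrow I_{ik}/I_{i,d+1}=e_iAe_k$.
   Context: A $d$-system of ideals in $R$ is a collection $\{I_{ij}\mid1\le i,j\le d+1\}$ of two-sided ideals with $I_{ij}I_{jk}\subset I_{ik}$ and $I_{ij}=R$ for $i\ge j$. $\mathscr{A}(R,\mathbf{I}):=\bigoplus_{1\le i,j\le d}I_{ij}/I_{i,d+1}$ (so $e_iAe_j=I_{ij}/I_{i,d+1}$) with multiplication $(x+I_{i,d+1})(y+I_{k,d+1})=\delta_{jk}(xy+I_{i,d+1})\in I_{il}/I_{i,d+1}$ for $x\in I_{ij},y\in I_{kl}$. Put $e_k:=1+I_{k,d+1}\in I_{kk}/I_{k,d+1}$, $f_j:=\sum_{k>j}e_k$ ($f_d=0$), $J_j:=Af_jA$, and $\Delta_k:=(A/J_k)e_k=Ae_k/Af_kAe_k$ for $1\le k\le d$. *)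

theory Defs
  imports Main
begin

definition two_sided_ideal :: "'a::ring_1 set \<Rightarrow> bool" where
  "two_sided_ideal S \<longleftrightarrow> 0 \<in> S \<and> (\<forall>x\<in>S. \<forall>y\<in>S. x + y \<in> S) \<and> (\<forall>x\<in>S. - x \<in> S)
     \<and> (\<forall>x\<in>S. \<forall>r. r * x \<in> S \<and> x * r \<in> S)"

text \<open>A d-system of ideals, indices 1..d+1. The inclusion of the ideal product
  I_ij I_jk in I_ik is written elementwise (equivalent since I_ik is an ideal).\<close>
definition d_system :: "nat \<Rightarrow> (nat \<Rightarrow> nat \<Rightarrow> 'a::ring_1 set) \<Rightarrow> bool" where
  "d_system d I \<longleftrightarrow>
     (\<forall>i\<in>{1..Suc d}. \<forall>j\<in>{1..Suc d}. two_sided_ideal (I i j)) \<and>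
     (\<forall>i\<in>{1..Suc d}. \<forall>j\<in>{1..Suc d}. j \<le> i \<longrightarrow> I i j = UNIV) \<and>
     (\<forall>i\<in>{1..Suc d}. \<forall>j\<in>{1..Suc d}. \<forall>k\<in>{1..Suc d}.
        \<forall>x\<in>I i j. \<forall>y\<in>I j k. x * y \<in> I i k)"

definition coset :: "'a::ring_1 \<Rightarrow> 'a set \<Rightarrow> 'a set" where
  "coset a S = (\<lambda>t. a + t) ` S"

text \<open>Elements of A(R,I): families X i j (1 \<le> i,j \<le> d), X i j a coset
  a + I_{i,d+1} with a in I_ij; entries outside the index range are {0}.\<close>
type_synonym 'a elt = "nat \<Rightarrow> nat \<Rightarrow> 'a set"

definition Acarrier :: "nat \<Rightarrow> (nat \<Rightarrow> nat \<Rightarrow> 'a::ring_1 set) \<Rightarrow> 'a elt set" where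
  "Acarrier d I = {X. (\<forall>i j. i \<in> {1..d} \<and> j \<in> {1..d} \<longrightarrow>
                        (\<exists>a\<in>I i j. X i j = coset a (I i (Suc d)))) \<and>
                      (\<forall>i j. \<not> (i \<in> {1..d} \<and> j \<in> {1..d}) \<longrightarrow> X i j = {0})}"

definition Azero :: "nat \<Rightarrow> (nat \<Rightarrow> nat \<Rightarrow> 'a::ring_1 set) \<Rightarrow> 'a elt" where
  "Azero d I = (\<lambda>i j. if i \<in> {1..d} \<and> j \<in> {1..d} then I i (Suc d) else {0})"

definition Aadd :: "'a::ring_1 elt \<Rightarrow> 'a elt \<Rightarrow> 'a elt" where
  "Aadd X Y = (\<lambda>i j. {x + y | x y. x \<in> X i j \<and> y \<in> Y i j})"

definition Amult :: "nat \<Rightarrow> (nat \<Rightarrow> nat \<Rightarrow> 'a::ring_1 set) \<Rightarrow> 'a elt \<Rightarrow> 'a elt \<Rightarrow> 'a elt" where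
  "Amult d I X Y = (\<lambda>i l. if i \<in> {1..d} \<and> l \<in> {1..d} then
      {(\<Sum>j\<in>{1..d}. f j * g j) + t | f g t.
          (\<forall>j\<in>{1..d}. f j \<in> X i j \<and> g j \<in> Y j l) \<and> t \<in> I i (Suc d)}
    else {0})"

text \<open>Single-entry element: coset a + I_{i,d+1} in position (i,j), zero elsewhere
  (this is the zero element if (i,j) is out of range).\<close>
definition Aentry :: "nat \<Rightarrow> (nat \<Rightarrow> nat \<Rightarrow> 'a::ring_1 set) \<Rightarrow> nat \<Rightarrow> nat \<Rightarrow> 'a \<Rightarrow> 'a elt" where
  "Aentry d I i j a = (\<lambda>i' j'. if i' \<in> {1..d} \<and> j' \<in> {1..d} then
      (if i' = i \<and> j' = j then coset a (I i' (Suc d)) else I i' (Suc d)) else {0})"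

text \<open>Idempotent e_k = 1 + I_{k,d+1} in position (k,k); for k = d+1 this is 0,
  giving the convention A e_{d+1} = 0.\<close>
definition Aidem :: "nat \<Rightarrow> (nat \<Rightarrow> nat \<Rightarrow> 'a::ring_1 set) \<Rightarrow> nat \<Rightarrow> 'a elt" where
  "Aidem d I k = Aentry d I k k 1"

definition Asum_list :: "nat \<Rightarrow> (nat \<Rightarrow> nat \<Rightarrow> 'a::ring_1 set) \<Rightarrow> 'a elt list \<Rightarrow> 'a elt" where
  "Asum_list d I xs = foldr Aadd xs (Azero d I)"

definition Af :: "nat \<Rightarrow> (nat \<Rightarrow> nat \<Rightarrow> 'a::ring_1 set) \<Rightarrow> nat \<Rightarrow> 'a elt" where
  "Af d I j = Asum_list d I (map (Aidem d I) [Suc j..<Suc d])"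

definition Aleft :: "nat \<Rightarrow> (nat \<Rightarrow> nat \<Rightarrow> 'a::ring_1 set) \<Rightarrow> 'a elt \<Rightarrow> 'a elt set" where
  "Aleft d I x = {Amult d I a x | a. a \<in> Acarrier d I}"

definition Atwo :: "nat \<Rightarrow> (nat \<Rightarrow> nat \<Rightarrow> 'a::ring_1 set) \<Rightarrow> 'a elt \<Rightarrow> 'a elt set" where
  "Atwo d I x = {Asum_list d I (map (\<lambda>(a, b). Amult d I (Amult d I a x) b) ps) | ps.
                   set ps \<subseteq> Acarrier d I \<times> Acarrier d I}"

text \<open>A f_k A e_k = J_k e_k.\<close>
definition JkEk :: "nat \<Rightarrow> (nat \<Rightarrow> nat \<Rightarrow> 'a::ring_1 set) \<Rightarrow> nat \<Rightarrow> 'a elt set" where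
  "JkEk d I k = {Amult d I y (Aidem d I k) | y. y \<in> Atwo d I (Af d I k)}"

text \<open>Canonical projection A e_k \<rightarrow> Delta_k = A e_k / A f_k A e_k (cosets), and Delta_k.\<close>
definition Delta_proj :: "nat \<Rightarrow> (nat \<Rightarrow> nat \<Rightarrow> 'a::ring_1 set) \<Rightarrow> nat \<Rightarrow> 'a elt \<Rightarrow> 'a elt set" where
  "Delta_proj d I k x = {Aadd x y | y. y \<in> JkEk d I k}"

definition Delta :: "nat \<Rightarrow> (nat \<Rightarrow> nat \<Rightarrow> 'a::ring_1 set) \<Rightarrow> nat \<Rightarrow> 'a elt set set" where
  "Delta d I k = Delta_proj d I k ` Aleft d I (Aidem d I k)"

end

theory Submission
  imports Defs
begin

text \<open>Every element of A is represented by a d x d matrix (x_ij) with x_ij in I_ij, whose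
  i-th row is read modulo I_{i,d+1}; addition and multiplication are those of matrices.
  In these coordinates A e_m consists of the matrices supported in column m with i-th entry in
  I_im, and J_k e_k of those supported in column k with i-th entry in I_{i,k+1}: every product
  a f_k b has its i-th row in I_{i,k+1}, because f_k only keeps the columns j > k of a and
  I_ij I_jl \<subseteq> I_il; conversely a column v placed in column k+1, multiplied by f_k and by the
  matrix unit at (k+1,k), is moved to column k. So the map psi moving column k+1 to column k
  is an injective module map from A e_{k+1} onto the kernel of A e_k \<rightarrow> Delta_k.\<close>

lemma two_sided_ideal_zero: "two_sided_ideal S \<Longrightarrow> 0 \<in> S"
  by (simp add: two_sided_ideal_def)

lemma two_sided_ideal_add: "two_sided_ideal S \<Longrightarrow> x \<in> S \<Longrightarrow> y \<in> S \<Longrightarrow> x + y \<in> S"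
  by (simp add: two_sided_ideal_def)

lemma two_sided_ideal_diff: "two_sided_ideal S \<Longrightarrow> x \<in> S \<Longrightarrow> y \<in> S \<Longrightarrow> x - y \<in> S"
  using two_sided_ideal_add[of S x "- y"] by (simp add: two_sided_ideal_def)

lemma two_sided_ideal_mult_right: "two_sided_ideal S \<Longrightarrow> x \<in> S \<Longrightarrow> x * r \<in> S"
  by (simp add: two_sided_ideal_def)

lemma two_sided_ideal_sum:
  assumes "two_sided_ideal S" "finite A" "\<And>j. j \<in> A \<Longrightarrow> f j \<in> S"
  shows "sum f A \<in> S"
  using assms(2,3)
  by (induction A rule: finite_induct)
    (auto intro: two_sided_ideal_add[OF assms(1)] two_sided_ideal_zero[OF assms(1)])

lemma mem_coset_iff: "y \<in> coset a S \<longleftrightarrow> y - a \<in> S"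
  by (force simp: coset_def)

lemma coset_eq_iff:
  assumes "two_sided_ideal S"
  shows "coset a S = coset b S \<longleftrightarrow> a - b \<in> S"
proof
  assume "coset a S = coset b S"
  moreover have "a \<in> coset a S"
    using two_sided_ideal_zero[OF assms] by (simp add: mem_coset_iff)
  ultimately show "a - b \<in> S"
    by (simp add: mem_coset_iff)
next
  assume ab: "a - b \<in> S"
  have "y - a \<in> S \<longleftrightarrow> y - b \<in> S" for y
    using two_sided_ideal_add[OF assms _ ab, of "y - a"] two_sided_ideal_diff[OF assms _ ab, of "y - b"]
    by (auto simp: algebra_simps)
  then show "coset a S = coset b S"
    by (auto simp: mem_coset_iff)
qed

lemma coset_zero: "coset 0 S = S"
  by (simp add: coset_def)

lemma coset_plus_coset:
  assumes "two_sided_ideal S"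
  shows "{p + q | p q. p \<in> coset a S \<and> q \<in> coset b S} = coset (a + b) S"
proof (intro set_eqI iffI)
  fix z
  assume "z \<in> {p + q | p q. p \<in> coset a S \<and> q \<in> coset b S}"
  then obtain p q where "z = p + q" "p - a \<in> S" "q - b \<in> S"
    by (auto simp: mem_coset_iff)
  moreover have "p + q - (a + b) = (p - a) + (q - b)"
    by (simp add: algebra_simps)
  ultimately show "z \<in> coset (a + b) S"
    using two_sided_ideal_add[OF assms] by (metis mem_coset_iff)
next
  fix z
  assume "z \<in> coset (a + b) S"
  then have "a \<in> coset a S" "z - a \<in> coset b S"
    using two_sided_ideal_zero[OF assms] by (simp_all add: mem_coset_iff diff_diff_eq)
  moreover have "z = a + (z - a)"
    by simp
  ultimately show "z \<in> {p + q | p q. p \<in> coset a S \<and> q \<in> coset b S}"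
    by blast
qed

definition Amat :: "nat \<Rightarrow> (nat \<Rightarrow> nat \<Rightarrow> 'a::ring_1 set) \<Rightarrow> (nat \<Rightarrow> nat \<Rightarrow> 'a) \<Rightarrow> 'a elt" where
  "Amat d I x = (\<lambda>i j. if i \<in> {1..d} \<and> j \<in> {1..d} then coset (x i j) (I i (Suc d)) else {0})"

definition entries_in :: "nat \<Rightarrow> (nat \<Rightarrow> nat \<Rightarrow> 'a set) \<Rightarrow> (nat \<Rightarrow> nat \<Rightarrow> 'a) \<Rightarrow> bool" where
  "entries_in d J x \<longleftrightarrow> (\<forall>i\<in>{1..d}. \<forall>j\<in>{1..d}. x i j \<in> J i j)"

definition mat_mult :: "nat \<Rightarrow> (nat \<Rightarrow> nat \<Rightarrow> 'a::semiring_0) \<Rightarrow> (nat \<Rightarrow> nat \<Rightarrow> 'a) \<Rightarrow> nat \<Rightarrow> nat \<Rightarrow> 'a" where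
  "mat_mult d x y = (\<lambda>i l. \<Sum>j\<in>{1..d}. x i j * y j l)"

definition col_mat :: "nat \<Rightarrow> (nat \<Rightarrow> 'a::zero) \<Rightarrow> nat \<Rightarrow> nat \<Rightarrow> 'a" where
  "col_mat m v = (\<lambda>i j. if j = m then v i else 0)"

definition mat_unit :: "nat \<Rightarrow> nat \<Rightarrow> nat \<Rightarrow> nat \<Rightarrow> 'a::{zero,one}" where
  "mat_unit m n = (\<lambda>i j. if i = m \<and> j = n then 1 else 0)"

definition f_mat :: "nat \<Rightarrow> nat \<Rightarrow> nat \<Rightarrow> 'a::{zero,one}" where
  "f_mat k = (\<lambda>i j. if i = j \<and> k < i then 1 else 0)"

definition Acol :: "nat \<Rightarrow> (nat \<Rightarrow> nat \<Rightarrow> 'a::ring_1 set) \<Rightarrow> nat \<Rightarrow> nat \<Rightarrow> 'a elt set" where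
  "Acol d I m n = {Amat d I (col_mat m v) | v. \<forall>i\<in>{1..d}. v i \<in> I i n}"

text \<open>For n = k+1 this two-sided ideal contains J_k.\<close>
definition Arow_ideal :: "nat \<Rightarrow> (nat \<Rightarrow> nat \<Rightarrow> 'a::ring_1 set) \<Rightarrow> nat \<Rightarrow> 'a elt set" where
  "Arow_ideal d I n = {Amat d I x | x. entries_in d I x \<and> entries_in d (\<lambda>i _. I i n) x}"

text \<open>Column d+1 does not exist, so for k = d the map is zero, matching A e_{d+1} = 0.\<close>
definition shift_col :: "nat \<Rightarrow> (nat \<Rightarrow> nat \<Rightarrow> 'a::ring_1 set) \<Rightarrow> nat \<Rightarrow> 'a elt \<Rightarrow> 'a elt" where
  "shift_col d I k X = (\<lambda>i j. if j = k \<and> Suc k \<le> d then X i (Suc k) else Azero d I i j)"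

lemma mat_mult_col_mat: "mat_mult d x (col_mat m v) = col_mat m (\<lambda>i. \<Sum>j\<in>{1..d}. x i j * v j)"
  by (intro ext) (simp add: mat_mult_def col_mat_def)

lemma col_mat_mat_mult:
  "m \<in> {1..d} \<Longrightarrow> mat_mult d (col_mat m v) y = (\<lambda>i l. v i * y m l)"
  by (intro ext) (simp add: mat_mult_def col_mat_def if_distrib[where f = "\<lambda>z. z * _"] cong: if_cong)

lemma mat_mult_mat_unit:
  "l \<in> {1..d} \<Longrightarrow> mat_mult d (x :: nat \<Rightarrow> nat \<Rightarrow> 'a::semiring_1) (mat_unit m m) i l = col_mat m (\<lambda>i. x i m) i l"
  by (auto simp: mat_mult_def mat_unit_def col_mat_def if_distrib[where f = "\<lambda>z. _ * z"] cong: if_cong)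

lemma col_mat_add: "(\<lambda>i j. col_mat m v i j + col_mat m w i j) = col_mat m (\<lambda>i. v i + w i :: 'a::monoid_add)"
  by (intro ext) (simp add: col_mat_def)

context
  fixes d :: nat and I :: "nat \<Rightarrow> nat \<Rightarrow> 'a::ring_1 set"
  assumes ds: "d_system d I"
begin

lemma d_system_ideal: "i \<in> {1..Suc d} \<Longrightarrow> j \<in> {1..Suc d} \<Longrightarrow> two_sided_ideal (I i j)"
  using ds by (simp add: d_system_def)

lemma d_system_UNIV: "i \<in> {1..Suc d} \<Longrightarrow> j \<in> {1..Suc d} \<Longrightarrow> j \<le> i \<Longrightarrow> I i j = UNIV"
  using ds by (simp add: d_system_def)

lemma d_system_mult:
  "\<lbrakk>i \<in> {1..Suc d}; j \<in> {1..Suc d}; l \<in> {1..Suc d}; x \<in> I i j; y \<in> I j l\<rbrakk> \<Longrightarrow> x * y \<in> I i l"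
  using ds unfolding d_system_def by blast

lemma d_system_antimono:
  assumes "i \<in> {1..Suc d}" "j \<in> {1..Suc d}" "l \<in> {1..Suc d}" "l \<le> j"
  shows "I i j \<subseteq> I i l"
  using d_system_mult[of i j l _ 1] d_system_UNIV[of j l] assms by auto

lemma d_system_Suc_subset: "i \<in> {1..d} \<Longrightarrow> k \<in> {1..d} \<Longrightarrow> I i (Suc k) \<subseteq> I i k"
  by (rule d_system_antimono) auto

lemma d_system_row_ideal: "i \<in> {1..d} \<Longrightarrow> n \<in> {1..Suc d} \<Longrightarrow> two_sided_ideal (I i n)"
  by (rule d_system_ideal) auto

lemma d_system_zero_mem: "i \<in> {1..d} \<Longrightarrow> n \<in> {1..Suc d} \<Longrightarrow> 0 \<in> I i n"
  by (rule two_sided_ideal_zero[OF d_system_row_ideal])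

lemma Amat_cong:
  "(\<And>i j. i \<in> {1..d} \<Longrightarrow> j \<in> {1..d} \<Longrightarrow> x i j = y i j) \<Longrightarrow> Amat d I x = Amat d I y"
  unfolding Amat_def by (intro ext) auto

lemma Amat_eq_iff:
  "Amat d I x = Amat d I y \<longleftrightarrow> (\<forall>i\<in>{1..d}. \<forall>j\<in>{1..d}. x i j - y i j \<in> I i (Suc d))"
proof
  assume "Amat d I x = Amat d I y"
  then have "coset (x i j) (I i (Suc d)) = coset (y i j) (I i (Suc d))"
    if "i \<in> {1..d}" "j \<in> {1..d}" for i j
    using that unfolding Amat_def by metis
  then show "\<forall>i\<in>{1..d}. \<forall>j\<in>{1..d}. x i j - y i j \<in> I i (Suc d)"
    using coset_eq_iff[OF d_system_row_ideal] by auto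
next
  assume "\<forall>i\<in>{1..d}. \<forall>j\<in>{1..d}. x i j - y i j \<in> I i (Suc d)"
  then show "Amat d I x = Amat d I y"
    using coset_eq_iff[OF d_system_row_ideal] by (intro ext) (auto simp: Amat_def)
qed


lemma Acarrier_eq: "Acarrier d I = {Amat d I x | x. entries_in d I x}"
proof (intro set_eqI iffI)
  fix X
  assume X: "X \<in> Acarrier d I"
  then have "\<exists>a. a \<in> I i j \<and> X i j = coset a (I i (Suc d))" if "i \<in> {1..d}" "j \<in> {1..d}" for i j
    using that unfolding Acarrier_def by blast
  then obtain x where x: "x i j \<in> I i j \<and> X i j = coset (x i j) (I i (Suc d))"
    if "i \<in> {1..d}" "j \<in> {1..d}" for i j
    by metis
  have "X = Amat d I x"
    using x X by (intro ext) (auto simp: Amat_def Acarrier_def)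
  moreover have "entries_in d I x"
    using x by (simp add: entries_in_def)
  ultimately show "X \<in> {Amat d I x | x. entries_in d I x}"
    by blast
next
  fix X
  assume "X \<in> {Amat d I x | x. entries_in d I x}"
  then show "X \<in> Acarrier d I"
    by (auto simp: Acarrier_def Amat_def entries_in_def)
qed

lemma Azero_Amat: "Azero d I = Amat d I (\<lambda>i j. 0)"
  by (intro ext) (simp add: Azero_def Amat_def coset_zero)

lemma Amat_col_mat_eq_Azero:
  assumes "\<forall>i\<in>{1..d}. v i \<in> I i (Suc d)"
  shows "Amat d I (col_mat m v) = Azero d I"
  using assms d_system_zero_mem[of _ "Suc d"] by (auto simp: Azero_Amat Amat_eq_iff col_mat_def)

lemma Aadd_Amat: "Aadd (Amat d I x) (Amat d I y) = Amat d I (\<lambda>i j. x i j + y i j)"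
  by (intro ext) (auto simp: Aadd_def Amat_def coset_plus_coset[OF d_system_row_ideal])

lemma Asum_list_Amat:
  "Asum_list d I (map (\<lambda>m. Amat d I (x m)) ms) = Amat d I (\<lambda>i j. \<Sum>m\<leftarrow>ms. x m i j)"
  by (induction ms) (simp_all add: Asum_list_def Azero_Amat Aadd_Amat)

lemma Aentry_Amat: "Aentry d I i j a = Amat d I (\<lambda>i' j'. if i' = i \<and> j' = j then a else 0)"
  by (intro ext) (simp add: Aentry_def Amat_def coset_zero)

lemma Aidem_Amat: "Aidem d I m = Amat d I (mat_unit m m)"
  unfolding Aidem_def Aentry_Amat mat_unit_def by (rule Amat_cong) auto

lemma Af_Amat: "Af d I k = Amat d I (f_mat k)"
proof -
  have "Af d I k = Amat d I (\<lambda>i j. \<Sum>m\<leftarrow>[Suc k..<Suc d]. mat_unit m m i j)"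
    unfolding Af_def Aidem_Amat by (simp add: Asum_list_Amat[symmetric] comp_def)
  also have "\<dots> = Amat d I (f_mat k)"
  proof (rule Amat_cong)
    fix i j
    assume "i \<in> {1..d}"
    have "(\<Sum>m\<leftarrow>[Suc k..<Suc d]. mat_unit m m i j) = (\<Sum>m\<in>{Suc k..<Suc d}. (mat_unit m m i j :: 'a))"
      by (simp only: sum_list_distinct_conv_sum_set distinct_upt set_upt)
    also have "\<dots> = (\<Sum>m\<in>{Suc k..<Suc d}. if m = i then (if i = j then 1 else 0) else 0)"
      by (intro sum.cong) (auto simp: mat_unit_def)
    also have "\<dots> = f_mat k i j"
      using \<open>i \<in> {1..d}\<close> by (simp add: f_mat_def)
    finally show "(\<Sum>m\<leftarrow>[Suc k..<Suc d]. mat_unit m m i j) = (f_mat k i j :: 'a)" .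
  qed
  finally show ?thesis .
qed

text \<open>Well-definedness: changing y_jl modulo I_{j,d+1} changes x_ij y_jl only modulo
  I_{i,d+1} because x_ij \<in> I_ij.\<close>
lemma Amult_Amat:
  assumes x: "entries_in d I x"
  shows "Amult d I (Amat d I x) (Amat d I y) = Amat d I (mat_mult d x y)"
proof (intro ext)
  fix i l
  show "Amult d I (Amat d I x) (Amat d I y) i l = Amat d I (mat_mult d x y) i l"
  proof (cases "i \<in> {1..d} \<and> l \<in> {1..d}")
    case False
    then show ?thesis
      unfolding Amult_def Amat_def by auto
  next
    case True
    then have i: "i \<in> {1..d}" and l: "l \<in> {1..d}"
      by auto
    let ?S = "I i (Suc d)"
    have S: "two_sided_ideal ?S"
      using i by (simp add: d_system_row_ideal)
    have "{(\<Sum>j\<in>{1..d}. f j * g j) + t | f g t.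
          (\<forall>j\<in>{1..d}. f j \<in> Amat d I x i j \<and> g j \<in> Amat d I y j l) \<and> t \<in> ?S}
         = coset (mat_mult d x y i l) ?S"
    proof (intro set_eqI iffI)
      fix z
      assume "z \<in> {(\<Sum>j\<in>{1..d}. f j * g j) + t | f g t.
          (\<forall>j\<in>{1..d}. f j \<in> Amat d I x i j \<and> g j \<in> Amat d I y j l) \<and> t \<in> ?S}"
      then obtain f g t where z: "z = (\<Sum>j\<in>{1..d}. f j * g j) + t" and t: "t \<in> ?S"
        and fg: "\<forall>j\<in>{1..d}. f j \<in> Amat d I x i j \<and> g j \<in> Amat d I y j l"
        by blast
      have "f j * g j - x i j * y j l \<in> ?S" if j: "j \<in> {1..d}" for j
      proof -
        have "(f j - x i j) * g j \<in> ?S"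
          using fg j i by (auto simp: Amat_def mem_coset_iff intro: two_sided_ideal_mult_right[OF S])
        moreover have "x i j * (g j - y j l) \<in> ?S"
          using fg x i j l by (intro d_system_mult[of i j]) (auto simp: Amat_def mem_coset_iff entries_in_def)
        moreover have "f j * g j - x i j * y j l = (f j - x i j) * g j + x i j * (g j - y j l)"
          by (simp add: algebra_simps)
        ultimately show ?thesis
          using two_sided_ideal_add[OF S] by metis
      qed
      then have "(\<Sum>j\<in>{1..d}. f j * g j - x i j * y j l) + t \<in> ?S"
        using t by (intro two_sided_ideal_add[OF S] two_sided_ideal_sum[OF S]) auto
      then show "z \<in> coset (mat_mult d x y i l) ?S"
        by (simp add: z mem_coset_iff mat_mult_def sum_subtractf algebra_simps)
    next
      fix z
      assume "z \<in> coset (mat_mult d x y i l) ?S"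
      moreover have "\<forall>j\<in>{1..d}. x i j \<in> Amat d I x i j \<and> y j l \<in> Amat d I y j l"
        using i l d_system_zero_mem by (auto simp: Amat_def mem_coset_iff)
      moreover have "z = (\<Sum>j\<in>{1..d}. x i j * y j l) + (z - mat_mult d x y i l)"
        by (simp add: mat_mult_def)
      ultimately show "z \<in> {(\<Sum>j\<in>{1..d}. f j * g j) + t | f g t.
          (\<forall>j\<in>{1..d}. f j \<in> Amat d I x i j \<and> g j \<in> Amat d I y j l) \<and> t \<in> ?S}"
        by (force simp: mem_coset_iff)
    qed
    then show ?thesis
      using True by (simp add: Amult_def Amat_def)
  qed
qed

lemma row_times_col_mem:
  assumes "entries_in d I x" "n \<in> {1..Suc d}" "\<forall>j\<in>{1..d}. v j \<in> I j n" "i \<in> {1..d}"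
  shows "(\<Sum>j\<in>{1..d}. x i j * v j) \<in> I i n"
proof (rule two_sided_ideal_sum[OF d_system_row_ideal])
  show "x i j * v j \<in> I i n" if "j \<in> {1..d}" for j
    using assms that by (intro d_system_mult[of i j n]) (auto simp: entries_in_def)
qed (use assms in auto)

lemma entries_in_mat_mult:
  assumes "entries_in d I x" "entries_in d I y"
  shows "entries_in d I (mat_mult d x y)"
  unfolding entries_in_def mat_mult_def
proof (intro ballI)
  fix i l
  assume "i \<in> {1..d}" "l \<in> {1..d}"
  with assms show "(\<Sum>j\<in>{1..d}. x i j * y j l) \<in> I i l"
    by (intro row_times_col_mem) (auto simp: entries_in_def)
qed

lemma entries_in_row_ideal_mat_mult_left:
  assumes "n \<in> {1..Suc d}" "entries_in d I x" "entries_in d (\<lambda>i _. I i n) y"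
  shows "entries_in d (\<lambda>i _. I i n) (mat_mult d x y)"
  unfolding entries_in_def mat_mult_def
proof (intro ballI)
  fix i l
  assume "i \<in> {1..d}" "l \<in> {1..d}"
  with assms show "(\<Sum>j\<in>{1..d}. x i j * y j l) \<in> I i n"
    by (intro row_times_col_mem) (auto simp: entries_in_def)
qed

lemma entries_in_row_ideal_mat_mult_right:
  assumes "n \<in> {1..Suc d}" "entries_in d (\<lambda>i _. I i n) x"
  shows "entries_in d (\<lambda>i _. I i n) (mat_mult d x y)"
  using assms unfolding entries_in_def mat_mult_def
  by (auto intro!: two_sided_ideal_sum[OF d_system_row_ideal]
      two_sided_ideal_mult_right[OF d_system_row_ideal])

lemma entries_in_mat_unit:
  "\<lbrakk>m \<in> {1..Suc d}; n \<in> {1..Suc d}; n \<le> m\<rbrakk> \<Longrightarrow> entries_in d I (mat_unit m n)"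
  by (auto simp: entries_in_def mat_unit_def d_system_UNIV intro: d_system_zero_mem)

lemma entries_in_col_mat:
  "\<lbrakk>m \<in> {1..Suc d}; \<forall>i\<in>{1..d}. v i \<in> I i m\<rbrakk> \<Longrightarrow> entries_in d I (col_mat m v)"
  by (auto simp: entries_in_def col_mat_def intro: d_system_zero_mem)

lemma entries_in_f_mat: "entries_in d I (f_mat k)"
  by (auto simp: entries_in_def f_mat_def d_system_UNIV intro: d_system_zero_mem)

lemma entries_in_row_ideal_f_mat: "k \<le> d \<Longrightarrow> entries_in d (\<lambda>i _. I i (Suc k)) (f_mat k)"
  by (auto simp: entries_in_def f_mat_def d_system_UNIV intro: d_system_zero_mem)

lemma Aleft_Amat: "Aleft d I (Amat d I y) = {Amat d I (mat_mult d x y) | x. entries_in d I x}"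
proof (intro set_eqI iffI)
  fix z
  assume "z \<in> Aleft d I (Amat d I y)"
  then show "z \<in> {Amat d I (mat_mult d x y) | x. entries_in d I x}"
    by (auto simp: Aleft_def Acarrier_eq Amult_Amat)
next
  fix z
  assume "z \<in> {Amat d I (mat_mult d x y) | x. entries_in d I x}"
  then obtain x where "z = Amult d I (Amat d I x) (Amat d I y)" "entries_in d I x"
    using Amult_Amat by auto
  then show "z \<in> Aleft d I (Amat d I y)"
    unfolding Aleft_def Acarrier_eq by blast
qed

lemma Aleft_Aidem:
  assumes m: "m \<in> {1..Suc d}"
  shows "Aleft d I (Aidem d I m) = Acol d I m m"
proof -
  have column: "Amat d I (mat_mult d x (mat_unit m m)) = Amat d I (col_mat m (\<lambda>i. x i m))" for x
    by (rule Amat_cong) (simp add: mat_mult_mat_unit)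
  have Aleft: "Aleft d I (Aidem d I m) = {Amat d I (col_mat m (\<lambda>i. x i m)) | x. entries_in d I x}"
    by (simp add: Aidem_Amat Aleft_Amat column)
  show ?thesis
  proof (intro set_eqI iffI)
    fix z
    assume "z \<in> Aleft d I (Aidem d I m)"
    then obtain x where x: "entries_in d I x" and z: "z = Amat d I (col_mat m (\<lambda>i. x i m))"
      using Aleft by blast
    define v where "v i = (if m \<le> d then x i m else 0)" for i
    have "z = Amat d I (col_mat m v)"
      unfolding z by (intro Amat_cong) (auto simp: col_mat_def v_def)
    moreover have "\<forall>i\<in>{1..d}. v i \<in> I i m"
      using x m d_system_zero_mem by (auto simp: v_def entries_in_def)
    ultimately show "z \<in> Acol d I m m"
      unfolding Acol_def by blast
  next
    fix z
    assume "z \<in> Acol d I m m"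
    then obtain v where v: "\<forall>i\<in>{1..d}. v i \<in> I i m" and z: "z = Amat d I (col_mat m v)"
      unfolding Acol_def by blast
    have "col_mat m (\<lambda>i. col_mat m v i m) = col_mat m v"
      by (simp add: col_mat_def)
    then have "z = Amat d I (col_mat m (\<lambda>i. col_mat m v i m))"
      by (simp add: z)
    then show "z \<in> Aleft d I (Aidem d I m)"
      unfolding Aleft using entries_in_col_mat[OF m v] by blast
  qed
qed

lemma Azero_mem_Acol:
  assumes "n \<in> {1..Suc d}"
  shows "Azero d I \<in> Acol d I m n"
proof -
  have "Azero d I = Amat d I (col_mat m (\<lambda>_. 0))"
    unfolding Azero_Amat by (rule Amat_cong) (simp add: col_mat_def)
  then show ?thesis
    using d_system_zero_mem[OF _ assms] unfolding Acol_def by blast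
qed

lemma Acol_antimono:
  assumes "n \<in> {1..Suc d}" "n' \<in> {1..Suc d}" "n' \<le> n"
  shows "Acol d I m n \<subseteq> Acol d I m n'"
proof
  fix z
  assume "z \<in> Acol d I m n"
  then obtain v where z: "z = Amat d I (col_mat m v)" and v: "\<forall>i\<in>{1..d}. v i \<in> I i n"
    unfolding Acol_def by blast
  have "\<forall>i\<in>{1..d}. v i \<in> I i n'"
    using v d_system_antimono[of _ n n'] assms by (meson atLeastAtMost_iff le_SucI subsetD)
  then show "z \<in> Acol d I m n'"
    unfolding Acol_def z by blast
qed

lemma Acol_translate:
  assumes n: "n \<in> {1..Suc d}" and x: "x \<in> Acol d I m n"
  shows "{Aadd x y | y. y \<in> Acol d I m n} = Acol d I m n"
proof -
  obtain w where x: "x = Amat d I (col_mat m w)" and w: "\<forall>i\<in>{1..d}. w i \<in> I i n"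
    using x unfolding Acol_def by blast
  have Aadd_x: "Aadd x (Amat d I (col_mat m v)) = Amat d I (col_mat m (\<lambda>i. w i + v i))" for v
    by (simp add: x Aadd_Amat col_mat_add)
  show ?thesis
  proof (intro set_eqI iffI)
    fix z
    assume "z \<in> {Aadd x y | y. y \<in> Acol d I m n}"
    then obtain v where "z = Amat d I (col_mat m (\<lambda>i. w i + v i))" "\<forall>i\<in>{1..d}. v i \<in> I i n"
      unfolding Acol_def using Aadd_x by blast
    then show "z \<in> Acol d I m n"
      unfolding Acol_def using w two_sided_ideal_add[OF d_system_row_ideal[OF _ n]] by blast
  next
    fix z
    assume "z \<in> Acol d I m n"
    then obtain v where z: "z = Amat d I (col_mat m v)" and v: "\<forall>i\<in>{1..d}. v i \<in> I i n"
      unfolding Acol_def by blast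
    have "z = Aadd x (Amat d I (col_mat m (\<lambda>i. v i - w i)))"
      by (simp add: Aadd_x z)
    moreover have "Amat d I (col_mat m (\<lambda>i. v i - w i)) \<in> Acol d I m n"
      unfolding Acol_def using v w two_sided_ideal_diff[OF d_system_row_ideal[OF _ n]] by blast
    ultimately show "z \<in> {Aadd x y | y. y \<in> Acol d I m n}"
      by blast
  qed
qed

lemma Azero_mem_Arow_ideal: "n \<in> {1..Suc d} \<Longrightarrow> Azero d I \<in> Arow_ideal d I n"
  unfolding Arow_ideal_def Azero_Amat
  by (intro CollectI exI[where x = "\<lambda>_ _. 0"]) (auto simp: entries_in_def intro: d_system_zero_mem)

lemma Aadd_mem_Arow_ideal:
  assumes n: "n \<in> {1..Suc d}" and "X \<in> Arow_ideal d I n" "Y \<in> Arow_ideal d I n"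
  shows "Aadd X Y \<in> Arow_ideal d I n"
proof -
  obtain x y where X: "X = Amat d I x" "entries_in d I x" "entries_in d (\<lambda>i _. I i n) x"
    and Y: "Y = Amat d I y" "entries_in d I y" "entries_in d (\<lambda>i _. I i n) y"
    using assms(2,3) unfolding Arow_ideal_def by blast
  have "entries_in d I (\<lambda>i j. x i j + y i j)"
    using X Y by (auto simp: entries_in_def intro!: two_sided_ideal_add[OF d_system_row_ideal])
  moreover have "entries_in d (\<lambda>i _. I i n) (\<lambda>i j. x i j + y i j)"
    using X Y n by (auto simp: entries_in_def intro!: two_sided_ideal_add[OF d_system_row_ideal])
  ultimately show ?thesis
    unfolding Arow_ideal_def X(1) Y(1) Aadd_Amat by blast
qed

lemma Asum_list_mem_Arow_ideal:
  "\<lbrakk>n \<in> {1..Suc d}; \<forall>X\<in>set Xs. X \<in> Arow_ideal d I n\<rbrakk> \<Longrightarrow> Asum_list d I Xs \<in> Arow_ideal d I n"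
  by (induction Xs) (auto simp: Asum_list_def Azero_mem_Arow_ideal Aadd_mem_Arow_ideal)

lemma Atwo_Af_subset_Arow_ideal:
  assumes "k \<le> d"
  shows "Atwo d I (Af d I k) \<subseteq> Arow_ideal d I (Suc k)"
proof
  fix y
  assume "y \<in> Atwo d I (Af d I k)"
  then obtain ps where y: "y = Asum_list d I (map (\<lambda>(a, b). Amult d I (Amult d I a (Af d I k)) b) ps)"
    and ps: "set ps \<subseteq> Acarrier d I \<times> Acarrier d I"
    unfolding Atwo_def by blast
  have "Amult d I (Amult d I a (Af d I k)) b \<in> Arow_ideal d I (Suc k)" if "(a, b) \<in> set ps" for a b
  proof -
    have "a \<in> Acarrier d I" "b \<in> Acarrier d I"
      using that ps by auto
    then obtain \<alpha> \<beta> where a: "a = Amat d I \<alpha>" "entries_in d I \<alpha>" and b: "b = Amat d I \<beta>" "entries_in d I \<beta>"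
      unfolding Acarrier_eq by blast
    have "Amult d I (Amult d I a (Af d I k)) b = Amat d I (mat_mult d (mat_mult d \<alpha> (f_mat k)) \<beta>)"
      using a b by (simp add: Af_Amat Amult_Amat entries_in_mat_mult entries_in_f_mat)
    moreover have "entries_in d I (mat_mult d (mat_mult d \<alpha> (f_mat k)) \<beta>)"
      using a b by (simp add: entries_in_mat_mult entries_in_f_mat)
    moreover have "entries_in d (\<lambda>i _. I i (Suc k)) (mat_mult d (mat_mult d \<alpha> (f_mat k)) \<beta>)"
      using a assms
      by (simp add: entries_in_row_ideal_mat_mult_right entries_in_row_ideal_mat_mult_left
          entries_in_row_ideal_f_mat)
    ultimately show ?thesis
      unfolding Arow_ideal_def by blast
  qed
  then show "y \<in> Arow_ideal d I (Suc k)"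
    unfolding y using assms by (intro Asum_list_mem_Arow_ideal) auto
qed

lemma JkEk_subset_Acol:
  assumes "1 \<le> k" "k \<le> d"
  shows "JkEk d I k \<subseteq> Acol d I k (Suc k)"
proof
  fix z
  assume "z \<in> JkEk d I k"
  then obtain y where z: "z = Amult d I y (Aidem d I k)" and "y \<in> Atwo d I (Af d I k)"
    unfolding JkEk_def by blast
  then obtain Y where y: "y = Amat d I Y" "entries_in d I Y" "entries_in d (\<lambda>i _. I i (Suc k)) Y"
    using Atwo_Af_subset_Arow_ideal assms unfolding Arow_ideal_def by blast
  have "z = Amat d I (col_mat k (\<lambda>i. Y i k))"
    unfolding z y(1) Aidem_Amat Amult_Amat[OF y(2)] by (rule Amat_cong) (simp add: mat_mult_mat_unit)
  moreover have "\<forall>i\<in>{1..d}. Y i k \<in> I i (Suc k)"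
    using y(3) assms by (auto simp: entries_in_def)
  ultimately show "z \<in> Acol d I k (Suc k)"
    unfolding Acol_def by blast
qed

lemma Acol_subset_JkEk:
  assumes k: "1 \<le> k" "k \<le> d"
  shows "Acol d I k (Suc k) \<subseteq> JkEk d I k"
proof
  fix z
  assume "z \<in> Acol d I k (Suc k)"
  then obtain v where z: "z = Amat d I (col_mat k v)" and v: "\<forall>i\<in>{1..d}. v i \<in> I i (Suc k)"
    unfolding Acol_def by blast
  have "\<forall>i\<in>{1..d}. v i \<in> I i k"
  proof
    fix i
    assume "i \<in> {1..d}"
    then show "v i \<in> I i k"
      using v k d_system_Suc_subset[of i k] by auto
  qed
  then have v_entries: "entries_in d I (col_mat k v)"
    using k by (intro entries_in_col_mat) auto
  have z_idem: "Amult d I z (Aidem d I k) = z"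
    unfolding z Aidem_Amat Amult_Amat[OF v_entries]
    by (rule Amat_cong) (simp add: mat_mult_mat_unit col_mat_def)
  have "z \<in> Atwo d I (Af d I k)"
  proof (cases "Suc k \<le> d")
    case True
    then have sk: "Suc k \<in> {1..d}"
      by simp
    let ?a = "Amat d I (col_mat (Suc k) v)" and ?b = "Amat d I (mat_unit (Suc k) k)"
    have a_entries: "entries_in d I (col_mat (Suc k) v)"
      using v k by (intro entries_in_col_mat) auto
    have "Amult d I ?a (Af d I k) = ?a"
      unfolding Af_Amat Amult_Amat[OF a_entries] col_mat_mat_mult[OF sk]
      by (rule Amat_cong) (simp add: f_mat_def col_mat_def)
    moreover have "Amult d I ?a ?b = z"
      unfolding z Amult_Amat[OF a_entries] col_mat_mat_mult[OF sk]
      by (rule Amat_cong) (simp add: mat_unit_def col_mat_def)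
    ultimately have "Asum_list d I (map (\<lambda>(a, b). Amult d I (Amult d I a (Af d I k)) b) [(?a, ?b)]) = z"
      by (simp add: Asum_list_def z Azero_Amat Aadd_Amat)
    moreover have "set [(?a, ?b)] \<subseteq> Acarrier d I \<times> Acarrier d I"
      using a_entries entries_in_mat_unit[of "Suc k" k] k unfolding Acarrier_eq by auto
    ultimately show ?thesis
      unfolding Atwo_def by blast
  next
    case False
    then have "k = d"
      using k by simp
    then have "z = Azero d I"
      using z v by (simp add: Amat_col_mat_eq_Azero)
    then show ?thesis
      unfolding Atwo_def by (intro CollectI exI[where x = "[]"]) (simp add: Asum_list_def)
  qed
  then show "z \<in> JkEk d I k"
    unfolding JkEk_def using z_idem by force
qed

lemma Delta_proj_eq:
  "\<lbrakk>1 \<le> k; k \<le> d\<rbrakk> \<Longrightarrow> Delta_proj d I k x = {Aadd x y | y. y \<in> Acol d I k (Suc k)}"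
  unfolding Delta_proj_def using JkEk_subset_Acol Acol_subset_JkEk by (metis subset_antisym)

lemma Delta_proj_kernel:
  assumes k: "1 \<le> k" "k \<le> d"
  shows "{x \<in> Aleft d I (Aidem d I k). Delta_proj d I k x = Delta_proj d I k (Azero d I)}
    = Acol d I k (Suc k)"
proof -
  have Suc_k: "Suc k \<in> {1..Suc d}"
    using k by simp
  have zero_class: "Delta_proj d I k (Azero d I) = Acol d I k (Suc k)"
    using Delta_proj_eq[OF k] Acol_translate[OF Suc_k Azero_mem_Acol[OF Suc_k]] by simp
  have own_class: "x \<in> Delta_proj d I k x" if x: "x \<in> Acol d I k k" for x
  proof -
    obtain v where "x = Amat d I (col_mat k v)"
      using x unfolding Acol_def by blast
    then have "x = Aadd x (Azero d I)"
      by (simp add: Azero_Amat Aadd_Amat)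
    then show ?thesis
      unfolding Delta_proj_eq[OF k] using Azero_mem_Acol[OF Suc_k] by blast
  qed
  have Ae_k: "Aleft d I (Aidem d I k) = Acol d I k k"
    using k by (intro Aleft_Aidem) auto
  show ?thesis
  proof (intro set_eqI iffI)
    fix x
    assume "x \<in> {x \<in> Aleft d I (Aidem d I k). Delta_proj d I k x = Delta_proj d I k (Azero d I)}"
    then have "x \<in> Acol d I k k" "Delta_proj d I k x = Acol d I k (Suc k)"
      using Ae_k zero_class by auto
    then show "x \<in> Acol d I k (Suc k)"
      using own_class by blast
  next
    fix x
    assume x: "x \<in> Acol d I k (Suc k)"
    then have "Delta_proj d I k x = Acol d I k (Suc k)"
      using Delta_proj_eq[OF k] Acol_translate[OF Suc_k] by simp
    moreover have "x \<in> Acol d I k k"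
      using x Acol_antimono[of "Suc k" k] k by auto
    ultimately show "x \<in> {x \<in> Aleft d I (Aidem d I k). Delta_proj d I k x = Delta_proj d I k (Azero d I)}"
      using Ae_k zero_class by simp
  qed
qed

lemma shift_col_Amat_col_mat:
  assumes "1 \<le> k" "k \<le> d" "\<forall>i\<in>{1..d}. v i \<in> I i (Suc k)"
  shows "shift_col d I k (Amat d I (col_mat (Suc k) v)) = Amat d I (col_mat k v)"
proof (cases "Suc k \<le> d")
  case True
  with assms(1) show ?thesis
    by (intro ext) (auto simp: shift_col_def Azero_def Amat_def col_mat_def coset_zero)
next
  case False
  then have "k = d"
    using assms by simp
  then have "Amat d I (col_mat k v) = Azero d I"
    using assms by (intro Amat_col_mat_eq_Azero) auto
  with False show ?thesis
    by (simp add: shift_col_def)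
qed

lemma shift_col_image:
  assumes "1 \<le> k" "k \<le> d"
  shows "shift_col d I k ` Acol d I (Suc k) (Suc k) = Acol d I k (Suc k)"
proof -
  have shift: "shift_col d I k (Amat d I (col_mat (Suc k) v)) = Amat d I (col_mat k v)"
    if "\<forall>i\<in>{1..d}. v i \<in> I i (Suc k)" for v
    using assms that by (rule shift_col_Amat_col_mat)
  show ?thesis
  proof (intro set_eqI iffI)
    fix z
    assume "z \<in> shift_col d I k ` Acol d I (Suc k) (Suc k)"
    then obtain v where "z = shift_col d I k (Amat d I (col_mat (Suc k) v))"
      and "\<forall>i\<in>{1..d}. v i \<in> I i (Suc k)"
      unfolding Acol_def by blast
    with shift show "z \<in> Acol d I k (Suc k)"
      unfolding Acol_def by blast
  next
    fix z
    assume "z \<in> Acol d I k (Suc k)"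
    then obtain v where "z = Amat d I (col_mat k v)" and v: "\<forall>i\<in>{1..d}. v i \<in> I i (Suc k)"
      unfolding Acol_def by blast
    with shift have "z = shift_col d I k (Amat d I (col_mat (Suc k) v))"
      by simp
    with v show "z \<in> shift_col d I k ` Acol d I (Suc k) (Suc k)"
      unfolding Acol_def by blast
  qed
qed

lemma shift_col_Aadd:
  assumes "1 \<le> k" "k \<le> d" "X \<in> Acol d I (Suc k) (Suc k)" "Y \<in> Acol d I (Suc k) (Suc k)"
  shows "shift_col d I k (Aadd X Y) = Aadd (shift_col d I k X) (shift_col d I k Y)"
proof -
  obtain v w where X: "X = Amat d I (col_mat (Suc k) v)" and v: "\<forall>i\<in>{1..d}. v i \<in> I i (Suc k)"
    and Y: "Y = Amat d I (col_mat (Suc k) w)" and w: "\<forall>i\<in>{1..d}. w i \<in> I i (Suc k)"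
    using assms(3,4) unfolding Acol_def by blast
  have "\<forall>i\<in>{1..d}. v i + w i \<in> I i (Suc k)"
    using v w assms(2) by (auto intro: two_sided_ideal_add[OF d_system_row_ideal])
  then show ?thesis
    using assms(1,2) v w by (simp add: X Y Aadd_Amat col_mat_add shift_col_Amat_col_mat)
qed

lemma shift_col_Amult:
  assumes "1 \<le> k" "k \<le> d" "a \<in> Acarrier d I" "X \<in> Acol d I (Suc k) (Suc k)"
  shows "shift_col d I k (Amult d I a X) = Amult d I a (shift_col d I k X)"
proof -
  obtain v where X: "X = Amat d I (col_mat (Suc k) v)" and v: "\<forall>i\<in>{1..d}. v i \<in> I i (Suc k)"
    using assms(4) unfolding Acol_def by blast
  obtain \<alpha> where a: "a = Amat d I \<alpha>" and \<alpha>: "entries_in d I \<alpha>"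
    using assms(3) unfolding Acarrier_eq by blast
  have "\<forall>i\<in>{1..d}. (\<Sum>j\<in>{1..d}. \<alpha> i j * v j) \<in> I i (Suc k)"
    using \<alpha> v assms(2) by (intro ballI row_times_col_mem) auto
  then show ?thesis
    using assms(1,2) v
    by (simp add: X a Amult_Amat[OF \<alpha>] mat_mult_col_mat shift_col_Amat_col_mat)
qed

lemma shift_col_Aentry:
  assumes "1 \<le> k" "k \<le> d" "i \<in> {1..d}" "a \<in> I i (Suc k)"
  shows "shift_col d I k (Aentry d I i (Suc k) a) = Aentry d I i k a"
proof -
  define v where "v i' = (if i' = i then a else 0)" for i'
  have "Aentry d I i m a = Amat d I (col_mat m v)" for m
    unfolding Aentry_Amat by (rule Amat_cong) (simp add: col_mat_def v_def)
  moreover have "\<forall>i'\<in>{1..d}. v i' \<in> I i' (Suc k)"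
    using assms by (auto simp: v_def intro: d_system_zero_mem)
  ultimately show ?thesis
    using assms(1,2) by (simp add: shift_col_Amat_col_mat)
qed

lemma inj_on_shift_col:
  assumes "1 \<le> k" "k \<le> d"
  shows "inj_on (shift_col d I k) (Acol d I (Suc k) (Suc k))"
proof (rule inj_onI)
  fix X Y
  assume "X \<in> Acol d I (Suc k) (Suc k)" "Y \<in> Acol d I (Suc k) (Suc k)"
    and shift_eq: "shift_col d I k X = shift_col d I k Y"
  then obtain v w where X: "X = Amat d I (col_mat (Suc k) v)" and v: "\<forall>i\<in>{1..d}. v i \<in> I i (Suc k)"
    and Y: "Y = Amat d I (col_mat (Suc k) w)" and w: "\<forall>i\<in>{1..d}. w i \<in> I i (Suc k)"
    unfolding Acol_def by blast
  have "Amat d I (col_mat k v) = Amat d I (col_mat k w)"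
    using shift_eq assms v w by (simp add: X Y shift_col_Amat_col_mat)
  then have col_k: "\<forall>i\<in>{1..d}. \<forall>j\<in>{1..d}. col_mat k v i j - col_mat k w i j \<in> I i (Suc d)"
    by (simp only: Amat_eq_iff)
  have "v i - w i \<in> I i (Suc d)" if "i \<in> {1..d}" for i
  proof -
    have "col_mat k v i k - col_mat k w i k \<in> I i (Suc d)"
      using col_k that assms by simp
    then show ?thesis
      by (simp add: col_mat_def)
  qed
  then have "\<forall>i\<in>{1..d}. \<forall>j\<in>{1..d}. col_mat (Suc k) v i j - col_mat (Suc k) w i j \<in> I i (Suc d)"
    by (simp add: col_mat_def d_system_zero_mem)
  then show "X = Y"
    unfolding X Y by (simp only: Amat_eq_iff)
qed

end

theorem lemma3p9:
  fixes d k :: nat and I :: "nat \<Rightarrow> nat \<Rightarrow> 'a::ring_1 set"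
  assumes "d_system d I" and "1 \<le> k" and "k \<le> d"
  shows "\<exists>\<psi>. \<psi> ` Aleft d I (Aidem d I (Suc k)) \<subseteq> Aleft d I (Aidem d I k)
      \<and> (\<forall>x\<in>Aleft d I (Aidem d I (Suc k)). \<forall>y\<in>Aleft d I (Aidem d I (Suc k)).
            \<psi> (Aadd x y) = Aadd (\<psi> x) (\<psi> y))
      \<and> (\<forall>a\<in>Acarrier d I. \<forall>x\<in>Aleft d I (Aidem d I (Suc k)).
            \<psi> (Amult d I a x) = Amult d I a (\<psi> x))
      \<and> (\<forall>i\<in>{1..d}. \<forall>a\<in>I i (Suc k). \<psi> (Aentry d I i (Suc k) a) = Aentry d I i k a)
      \<and> inj_on \<psi> (Aleft d I (Aidem d I (Suc k)))
      \<and> Delta_proj d I k ` Aleft d I (Aidem d I k) = Delta d I k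
      \<and> {x \<in> Aleft d I (Aidem d I k). Delta_proj d I k x = Delta_proj d I k (Azero d I)}
          = \<psi> ` Aleft d I (Aidem d I (Suc k))"
proof -
  note ds = assms(1) and k = assms(2,3)
  have Ae_Suc_k: "Aleft d I (Aidem d I (Suc k)) = Acol d I (Suc k) (Suc k)"
    and Ae_k: "Aleft d I (Aidem d I k) = Acol d I k k"
    using Aleft_Aidem[OF ds] k by auto
  have image: "shift_col d I k ` Aleft d I (Aidem d I (Suc k)) = Acol d I k (Suc k)"
    using shift_col_image[OF ds k] by (simp add: Ae_Suc_k)
  show ?thesis
  proof (intro exI[where x = "shift_col d I k"] conjI)
    show "shift_col d I k ` Aleft d I (Aidem d I (Suc k)) \<subseteq> Aleft d I (Aidem d I k)"
      unfolding image Ae_k using Acol_antimono[OF ds, of "Suc k" k] k by simp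
    show "\<forall>x\<in>Aleft d I (Aidem d I (Suc k)). \<forall>y\<in>Aleft d I (Aidem d I (Suc k)).
        shift_col d I k (Aadd x y) = Aadd (shift_col d I k x) (shift_col d I k y)"
      unfolding Ae_Suc_k using shift_col_Aadd[OF ds k] by blast
    show "\<forall>a\<in>Acarrier d I. \<forall>x\<in>Aleft d I (Aidem d I (Suc k)).
        shift_col d I k (Amult d I a x) = Amult d I a (shift_col d I k x)"
      unfolding Ae_Suc_k using shift_col_Amult[OF ds k] by blast
    show "\<forall>i\<in>{1..d}. \<forall>a\<in>I i (Suc k).
        shift_col d I k (Aentry d I i (Suc k) a) = Aentry d I i k a"
      using shift_col_Aentry[OF ds k] by blast
    show "inj_on (shift_col d I k) (Aleft d I (Aidem d I (Suc k)))"
      unfolding Ae_Suc_k by (rule inj_on_shift_col[OF ds k])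
    show "Delta_proj d I k ` Aleft d I (Aidem d I k) = Delta d I k"
      by (simp add: Delta_def)
    show "{x \<in> Aleft d I (Aidem d I k). Delta_proj d I k x = Delta_proj d I k (Azero d I)}
        = shift_col d I k ` Aleft d I (Aidem d I (Suc k))"
      unfolding image by (rule Delta_proj_kernel[OF ds k])
  qed
qed

end
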